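(* Work on $\mathbb R^5$ with coordinates $x_1,\dots,x_5$ and the objects defined in the context. For $\mathbf w\in\{\mathbf u,\mathbf v\}$ the following two sets of formal vector fields are equal: $\{F_1\,\partial\,\mathbf w+F_2\,(b,\mathbf w)^{(1)}+F_3\,(a,\mathbf w)^{(1)}: F_1,F_2\in\mathcal R[[a,b]],\ F_3\in\mathcal R[[a]]\}$ and $\{G_1\,(b,\mathbf w)^{(1)}+G_2\,(a,\mathbf w)^{(1)}: G_1,G_2\in\mathcal R[[a,b]]\}$.
   Context: Let $N=\mathrm{diag}(N_2,N_3)$ be the $5\times5$ nilpotent matrix in upper Jordan form with blocks of sizes 2 and 3, $M=\mathrm{diag}(M_2,M_3)$ with $M_2=\begin{pmatrix}0&0\\1&0\end{pmatrix}$, $M_3=\begin{pmatrix}0&0&0\\2&0&0\\0&2&0\end{pmatrix}$, and $H=\mathrm{diag}(1,-1,2,0,-2)$. With $\mathcal D_Af(\mathbf x)=f'(\mathbf x)A\mathbf x$, put $\mathcal Y=\mathcal D_{M^*}=x_2\partial_{x_1}+2x_4\partial_{x_3}+2x_5\partial_{x_4}$. Invariants (elements of $\ker\mathcal D_{N^*}$, weights w.r.t. $\mathcal D_H$): $a=x_1$ (weight 1), $b=x_3$ (weight 2), $c=x_4^2-2x_3x_5$ (weight 0), $\partial=(a,b)^{(1)}=\widehat a\,a\,\mathcal Yb-\widehat b(\mathcal Ya)b=2x_1x_4-2x_2x_3$ (weight 1), $e=(a^2,b)^{(2)}=8x_1^2x_5-8x_1x_2x_4+4x_2^2x_3$ (weight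 0). $\mathcal R=\mathbb R[[c,e]]$, and $\mathcal R[[a,b]]$ (resp. $\mathcal R[[a]]$) denotes the set of all $F(a,b,c,e)$ (resp. $F(a,c,e)$) for formal power series $F$. Let $\mathbf u=\mathbf e_2$ (weight 1) and $\mathbf v=\mathbf e_5$ (weight 2), standard basis vectors. For an invariant $f$ of weight $\widehat f\ge1$ and $\mathbf w\in\{\mathbf u,\mathbf v\}$ of weight $\widehat{\mathbf w}$, $(f,\mathbf w)^{(1)}=-\widehat f\,f\,M^*\mathbf w-\widehat{\mathbf w}(\mathcal Yf)\mathbf w$; explicitly $(a,\mathbf u)^{(1)}=-(x_1\mathbf e_1+x_2\mathbf e_2)$, $(b,\mathbf u)^{(1)}=-(2x_3\mathbf e_1+2x_4\mathbf e_2)$, $(a,\mathbf v)^{(1)}=-(2x_1\mathbf e_4+2x_2\mathbf e_5)$, $(b,\mathbf v)^{(1)}=-(4x_3\mathbf e_4+4x_4\mathbf e_5)$. *)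

theory Defs
  imports Complex_Main "HOL-Library.Poly_Mapping"
begin

text \<open>Formal power series in the variables x_1,...,x_5 (variable index i stands for x_i).\<close>

type_synonym mono = "nat \<Rightarrow>\<^sub>0 nat"
type_synonym mps = "mono \<Rightarrow> real"
text \<open>Formal vector fields: component i (i = 1..5) is a formal power series.\<close>
type_synonym vfield = "nat \<Rightarrow> mps"

definition mdeg :: "mono \<Rightarrow> nat" where
  "mdeg m = (\<Sum>i\<in>Poly_Mapping.keys m. Poly_Mapping.lookup m i)"

definition mps_add :: "mps \<Rightarrow> mps \<Rightarrow> mps" where
  "mps_add f g = (\<lambda>m. f m + g m)"

definition mps_smult :: "real \<Rightarrow> mps \<Rightarrow> mps" where
  "mps_smult r f = (\<lambda>m. r * f m)"

definition mps_mult :: "mps \<Rightarrow> mps \<Rightarrow> mps" where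
  "mps_mult f g = (\<lambda>m. \<Sum>(p, q) \<in> {(p, q). p + q = m}. f p * g q)"

definition mps_one :: mps where
  "mps_one = (\<lambda>m. if m = 0 then 1 else 0)"

fun mps_pow :: "mps \<Rightarrow> nat \<Rightarrow> mps" where
  "mps_pow f 0 = mps_one"
| "mps_pow f (Suc n) = mps_mult f (mps_pow f n)"

definition X :: "nat \<Rightarrow> mps" where
  "X i = (\<lambda>m. if m = Poly_Mapping.single i 1 then 1 else 0)"

definition pd :: "nat \<Rightarrow> mps \<Rightarrow> mps" where
  "pd i f = (\<lambda>m. real (Poly_Mapping.lookup m i + 1) * f (m + Poly_Mapping.single i 1))"

text \<open>Y = D_{M^*} = x_2 d/dx_1 + 2 x_4 d/dx_3 + 2 x_5 d/dx_4.\<close>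
definition opY :: "mps \<Rightarrow> mps" where
  "opY f = mps_add (mps_mult (X 2) (pd 1 f))
             (mps_add (mps_smult 2 (mps_mult (X 4) (pd 3 f)))
                      (mps_smult 2 (mps_mult (X 5) (pd 4 f))))"

text \<open>The matrix M^* (transpose of M = diag(M_2, M_3)), entries indexed 1..5.\<close>
definition Mstar :: "nat \<Rightarrow> nat \<Rightarrow> real" where
  "Mstar i j = (if (i, j) = (1, 2) then 1 else if (i, j) = (3, 4) then 2
                else if (i, j) = (4, 5) then 2 else 0)"

text \<open>Constant vectors in R^5 as functions on indices 1..5; standard basis vector e_k.\<close>
definition evec :: "nat \<Rightarrow> nat \<Rightarrow> real" where
  "evec k = (\<lambda>j. if j = k then 1 else 0)"

definition Mstar_app :: "(nat \<Rightarrow> real) \<Rightarrow> nat \<Rightarrow> real" where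
  "Mstar_app w = (\<lambda>i. \<Sum>j\<in>{1..5}. Mstar i j * w j)"

text \<open>Transvectant (f, w)^(1) = - hat f * f * M^* w - hat w * (Y f) * w,
  for an invariant f of weight fw and a constant vector w of weight ww.\<close>
definition trans1 :: "mps \<Rightarrow> real \<Rightarrow> (nat \<Rightarrow> real) \<Rightarrow> real \<Rightarrow> vfield" where
  "trans1 f fw w ww = (\<lambda>i. mps_add (mps_smult (- fw * Mstar_app w i) f)
                                   (mps_smult (- ww * w i) (opY f)))"

definition inv_a :: mps where "inv_a = X 1"
definition inv_b :: mps where "inv_b = X 3"
definition inv_c :: mps where
  "inv_c = mps_add (mps_mult (X 4) (X 4)) (mps_smult (-2) (mps_mult (X 3) (X 5)))"
definition inv_d :: mps where
  "inv_d = mps_add (mps_smult 2 (mps_mult (X 1) (X 4))) (mps_smult (-2) (mps_mult (X 2) (X 3)))"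
definition inv_e :: mps where
  "inv_e = mps_add (mps_smult 8 (mps_mult (mps_mult (X 1) (X 1)) (X 5)))
            (mps_add (mps_smult (-8) (mps_mult (mps_mult (X 1) (X 2)) (X 4)))
                     (mps_smult 4 (mps_mult (mps_mult (X 2) (X 2)) (X 3))))"

text \<open>Substitution F(p1,p2,p3,p4) of series p1..p4 without constant term into a formal
  power series F in four variables, given by its coefficients F i j k l of
  y1^i y2^j y3^k y4^l. Since every pk has no monomials of degree 0, only the finitely many
  (i,j,k,l) with entries bounded by the degree of m contribute to the coefficient of m.\<close>
definition subst4 :: "(nat \<Rightarrow> nat \<Rightarrow> nat \<Rightarrow> nat \<Rightarrow> real) \<Rightarrow> mps \<Rightarrow> mps \<Rightarrow> mps \<Rightarrow> mps \<Rightarrow> mps" where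
  "subst4 F p1 p2 p3 p4 = (\<lambda>m.
     \<Sum>i\<le>mdeg m. \<Sum>j\<le>mdeg m. \<Sum>k\<le>mdeg m. \<Sum>l\<le>mdeg m.
       F i j k l * mps_mult (mps_mult (mps_pow p1 i) (mps_pow p2 j))
                            (mps_mult (mps_pow p3 k) (mps_pow p4 l)) m)"

text \<open>R[[a,b]] = all F(a,b,c,e); R[[a]] = all F(a,c,e) (F not depending on its b-slot).\<close>
definition Rab :: "mps set" where
  "Rab = {subst4 F inv_a inv_b inv_c inv_e | F. True}"

definition Ra :: "mps set" where
  "Ra = {subst4 F inv_a inv_b inv_c inv_e | F. \<forall>i j k l. j \<noteq> 0 \<longrightarrow> F i j k l = 0}"

definition vscale :: "mps \<Rightarrow> vfield \<Rightarrow> vfield" where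
  "vscale F V = (\<lambda>i. mps_mult F (V i))"

definition vadd :: "vfield \<Rightarrow> vfield \<Rightarrow> vfield" where
  "vadd V W = (\<lambda>i. mps_add (V i) (W i))"

definition vconst :: "(nat \<Rightarrow> real) \<Rightarrow> vfield" where
  "vconst w = (\<lambda>i. mps_smult (w i) mps_one)"

end

theory Submission
  imports Defs "HOL-Library.FuncSet"
begin

text \<open>Write \<open>d = (a,b)^(1)\<close>, \<open>T\<^sub>a = (a,w)^(1)\<close> and \<open>T\<^sub>b = (b,w)^(1)\<close>. A direct computation gives
  \<open>\<gamma> d w = 2 b T\<^sub>a - a T\<^sub>b\<close> with \<open>\<gamma> = 1\<close> for \<open>w = u\<close> and \<open>\<gamma> = 2\<close> for \<open>w = v\<close>. Hence a term \<open>F\<^sub>1 d w\<close>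
  with \<open>F\<^sub>1 \<in> R[[a,b]]\<close> is absorbed into the other two summands. Conversely, split
  \<open>G\<^sub>2 = G\<^sub>2(a,0,c,e) + b h\<close> with \<open>h \<in> R[[a,b]]\<close>; the same relation trades \<open>b h T\<^sub>a\<close> for a multiple
  of \<open>d w\<close> plus a multiple of \<open>T\<^sub>b\<close>. The only algebraic input is that \<open>R[[a,b]]\<close> is a real vector
  space closed under multiplication by \<open>a\<close> and \<open>b\<close>, which holds because multiplying a
  substituted series by one of the substituted variables shifts its coefficient array.\<close>

section \<open>The ring of formal power series\<close>

definition submonos :: "mono \<Rightarrow> mono set" where
  "submonos m = {p. \<exists>q. p + q = m}"

lemma lookup_le_of_submonos: "p \<in> submonos m \<Longrightarrow> Poly_Mapping.lookup p i \<le> Poly_Mapping.lookup m i"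
  by (auto simp: submonos_def lookup_add)

lemma finite_submonos: "finite (submonos m)"
proof -
  let ?f = "\<lambda>p::mono. restrict (Poly_Mapping.lookup p) (Poly_Mapping.keys m)"
  have "inj_on ?f (submonos m)"
  proof (rule inj_onI)
    fix p p' assume p: "p \<in> submonos m" and p': "p' \<in> submonos m" and eq: "?f p = ?f p'"
    show "p = p'"
    proof (rule poly_mapping_eqI)
      fix k show "Poly_Mapping.lookup p k = Poly_Mapping.lookup p' k"
      proof (cases "k \<in> Poly_Mapping.keys m")
        case True then show ?thesis using fun_cong[OF eq, of k] by simp
      next
        case False
        then have "Poly_Mapping.lookup m k = 0" by (simp add: in_keys_iff)
        then show ?thesis
          using lookup_le_of_submonos[OF p, of k] lookup_le_of_submonos[OF p', of k] by simp
      qed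
    qed
  qed
  moreover have "?f ` submonos m \<subseteq> PiE (Poly_Mapping.keys m) (\<lambda>i. {..Poly_Mapping.lookup m i})"
    using lookup_le_of_submonos by auto
  then have "finite (?f ` submonos m)"
    by (rule finite_subset) (rule finite_PiE, auto)
  ultimately show ?thesis by (simp add: finite_image_iff)
qed

lemma submonos_add_diff: "p \<in> submonos m \<Longrightarrow> p + (m - p) = m"
  by (auto simp: submonos_def)

lemma diff_in_submonos: "p \<in> submonos m \<Longrightarrow> m - p \<in> submonos m"
  by (auto simp: submonos_def add.commute)

lemma zero_in_submonos: "0 \<in> submonos m"
  by (auto simp: submonos_def)

lemma mps_mult_eq_sum: "mps_mult f g m = (\<Sum>p\<in>submonos m. f p * g (m - p))"
proof -
  have "{(p, q). p + q = m} = (\<lambda>p. (p, m - p)) ` submonos m"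
    by (auto simp: submonos_def image_iff)
  moreover have "inj_on (\<lambda>p. (p, m - p)) (submonos m)"
    by (auto intro: inj_onI)
  ultimately show ?thesis
    by (simp add: mps_mult_def sum.reindex)
qed

lemma mps_mult_commute: "mps_mult f g = mps_mult g f"
proof
  fix m
  have "(\<Sum>p\<in>submonos m. f p * g (m - p)) = (\<Sum>p\<in>submonos m. g p * f (m - p))"
    by (rule sum.reindex_bij_witness[where i="\<lambda>p. m - p" and j="\<lambda>p. m - p"])
      (auto simp: diff_in_submonos, (metis submonos_add_diff add_diff_cancel_right')+)
  then show "mps_mult f g m = mps_mult g f m"
    by (simp add: mps_mult_eq_sum)
qed

lemma mps_mult_assoc: "mps_mult (mps_mult f g) h = mps_mult f (mps_mult g h)"
proof
  fix m
  have "mps_mult (mps_mult f g) h m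
      = (\<Sum>(p, r)\<in>Sigma (submonos m) submonos. f r * g (p - r) * h (m - p))"
    by (simp add: mps_mult_eq_sum sum_distrib_right sum.Sigma finite_submonos)
  also have "\<dots> = (\<Sum>(r, s)\<in>Sigma (submonos m) (\<lambda>r. submonos (m - r)). f r * g s * h (m - r - s))"
    apply (rule sum.reindex_bij_witness[where i="\<lambda>(r, s). (r + s, r)" and j="\<lambda>(p, r). (r, p - r)"])
        apply (auto simp: submonos_def diff_diff_add)
      apply (metis add.assoc)
     apply (simp add: add.assoc)
    apply (metis add.assoc)
    done
  also have "\<dots> = mps_mult f (mps_mult g h) m"
    by (simp add: mps_mult_eq_sum sum_distrib_left mult.assoc sum.Sigma finite_submonos)
  finally show "mps_mult (mps_mult f g) h m = mps_mult f (mps_mult g h) m" .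
qed

lemma sum_mps_one_mult: "(\<Sum>p\<in>submonos m. mps_one p * g (m - p)) = g m"
proof -
  have "(\<Sum>p\<in>submonos m. mps_one p * g (m - p)) = (\<Sum>p\<in>submonos m. if p = 0 then g m else 0)"
    by (rule sum.cong) (auto simp: mps_one_def)
  then show ?thesis
    by (simp add: finite_submonos zero_in_submonos)
qed

lemma mps_mult_one_left: "mps_mult mps_one g = g"
  by (rule ext) (simp add: mps_mult_eq_sum sum_mps_one_mult)

lemma mps_mult_add_right: "mps_mult f (mps_add g h) = mps_add (mps_mult f g) (mps_mult f h)"
  by (auto simp: mps_mult_eq_sum mps_add_def distrib_left sum.distrib)

typedef series = "UNIV :: mps set"
  morphisms coef series_of
  by auto

lemma series_of_inverse' [simp]: "coef (series_of f) = f"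
  by (simp add: series_of_inverse)

instantiation series :: comm_ring_1
begin

definition "0 = series_of (\<lambda>_. 0)"
definition "1 = series_of mps_one"
definition "x + y = series_of (mps_add (coef x) (coef y))"
definition "- x = series_of (\<lambda>m. - coef x m)"
definition "x - y = series_of (\<lambda>m. coef x m - coef y m)"
definition "x * y = series_of (mps_mult (coef x) (coef y))"

instance
proof
  fix a b c :: series
  show "a * b * c = a * (b * c)" by (simp add: times_series_def mps_mult_assoc)
  show "a * b = b * a" by (simp add: times_series_def mps_mult_commute)
  show "1 * a = a" by (simp add: times_series_def one_series_def mps_mult_one_left coef_inverse)
  show "(a + b) * c = a * c + b * c"
    by (simp add: times_series_def plus_series_def mps_mult_commute[of _ "coef c"] mps_mult_add_right)
  show "a + b + c = a + (b + c)" by (simp add: plus_series_def mps_add_def add.assoc)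
  show "a + b = b + a" by (simp add: plus_series_def mps_add_def add.commute)
  show "0 + a = a" by (simp add: plus_series_def zero_series_def mps_add_def coef_inverse)
  show "- a + a = 0" by (simp add: plus_series_def zero_series_def uminus_series_def mps_add_def)
  show "a - b = a + - b" by (simp add: plus_series_def minus_series_def uminus_series_def mps_add_def)
  show "(0::series) \<noteq> 1"
    by (simp add: zero_series_def one_series_def series_of_inject fun_eq_iff mps_one_def)
qed

end

lemma series_of_add: "series_of (mps_add f g) = series_of f + series_of g"
  by (simp add: plus_series_def)

lemma series_of_mult: "series_of (mps_mult f g) = series_of f * series_of g"
  by (simp add: times_series_def)

lemma series_of_one: "series_of mps_one = 1"
  by (simp add: one_series_def)

lemma series_of_zero: "series_of (\<lambda>_. 0) = 0"
  by (simp add: zero_series_def)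

lemma series_of_pow: "series_of (mps_pow f n) = series_of f ^ n"
  by (induction n) (simp_all add: series_of_one series_of_mult)

lemma coef_add: "coef (x + y) = mps_add (coef x) (coef y)"
  by (simp add: plus_series_def)

lemma coef_mult: "coef (x * y) m = (\<Sum>p\<in>submonos m. coef x p * coef y (m - p))"
  by (simp add: times_series_def mps_mult_eq_sum)

definition sconst :: "real \<Rightarrow> series" where
  "sconst r = series_of (mps_smult r mps_one)"

lemma coef_sconst_mult: "coef (sconst r * x) = mps_smult r (coef x)"
proof
  fix m
  show "coef (sconst r * x) m = mps_smult r (coef x) m"
    using sum_mps_one_mult[where m=m and g="coef x"]
    by (simp add: coef_mult sconst_def mps_smult_def sum_distrib_left[symmetric] mult.assoc)
qed

lemma series_of_smult: "series_of (mps_smult r f) = sconst r * series_of f"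
  using arg_cong[OF coef_sconst_mult[of r "series_of f"], of series_of]
  by (simp add: coef_inverse)

lemma sconst_mult: "sconst (r * s) = sconst r * sconst s"
proof -
  have "sconst r * sconst s = series_of (mps_smult r (mps_smult s mps_one))"
    unfolding sconst_def[of s] by (rule series_of_smult[symmetric])
  also have "\<dots> = sconst (r * s)"
    by (simp add: sconst_def mps_smult_def mult.assoc)
  finally show ?thesis ..
qed

lemma sconst_add: "sconst (r + s) = sconst r + sconst s"
  by (simp add: sconst_def plus_series_def mps_add_def mps_smult_def distrib_right)

lemma sconst_one: "sconst 1 = 1"
  by (simp add: sconst_def one_series_def mps_smult_def)

lemma sconst_zero: "sconst 0 = 0"
  by (simp add: sconst_def zero_series_def mps_smult_def)

lemma sconst_uminus: "sconst (- r) = - sconst r"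
  by (metis add_eq_0_iff sconst_add sconst_zero)

lemma sconst_of_nat: "sconst (of_nat n) = of_nat n"
  by (induction n) (simp_all add: sconst_zero sconst_add sconst_one)

lemma sconst_numeral: "sconst (numeral n) = numeral n"
  using sconst_of_nat[of "numeral n"] by simp

lemma sconst_divide_cancel: "r \<noteq> 0 \<Longrightarrow> sconst (1 / r) * sconst r = 1"
  by (simp add: sconst_mult[symmetric] sconst_one)

lemma mdeg_eq_sum: "finite K \<Longrightarrow> Poly_Mapping.keys m \<subseteq> K \<Longrightarrow> mdeg m = (\<Sum>i\<in>K. Poly_Mapping.lookup m i)"
  unfolding mdeg_def by (rule sum.mono_neutral_left) (auto simp: in_keys_iff)

lemma mdeg_add: "mdeg (p + q) = mdeg p + mdeg q"
proof -
  let ?K = "Poly_Mapping.keys p \<union> Poly_Mapping.keys q"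
  have "mdeg (p + q) = (\<Sum>i\<in>?K. Poly_Mapping.lookup (p + q) i)"
    using keys_add[of p q] by (intro mdeg_eq_sum) auto
  also have "\<dots> = (\<Sum>i\<in>?K. Poly_Mapping.lookup p i) + (\<Sum>i\<in>?K. Poly_Mapping.lookup q i)"
    by (simp add: lookup_add sum.distrib)
  also have "\<dots> = mdeg p + mdeg q"
    using mdeg_eq_sum[of ?K p] mdeg_eq_sum[of ?K q] by simp
  finally show ?thesis .
qed

lemma mdeg_submonos: "p \<in> submonos m \<Longrightarrow> mdeg p + mdeg (m - p) = mdeg m"
  by (metis submonos_add_diff mdeg_add)

definition ord_ge :: "nat \<Rightarrow> series \<Rightarrow> bool" where
  "ord_ge k x \<longleftrightarrow> (\<forall>m. mdeg m < k \<longrightarrow> coef x m = 0)"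

lemma ord_ge_0: "ord_ge 0 x"
  by (simp add: ord_ge_def)

lemma ord_ge_mult: "ord_ge k x \<Longrightarrow> ord_ge l y \<Longrightarrow> ord_ge (k + l) (x * y)"
  unfolding ord_ge_def
proof (intro allI impI)
  fix m assume x: "\<forall>m. mdeg m < k \<longrightarrow> coef x m = 0" and y: "\<forall>m. mdeg m < l \<longrightarrow> coef y m = 0"
    and m: "mdeg m < k + l"
  have "coef x p * coef y (m - p) = 0" if "p \<in> submonos m" for p
  proof -
    have "mdeg p < k \<or> mdeg (m - p) < l"
      using mdeg_submonos[OF that] m by linarith
    then show ?thesis using x y by auto
  qed
  then show "coef (x * y) m = 0"
    unfolding coef_mult by (rule sum.neutral[rule_format])
qed

lemma ord_ge_1_mult: "ord_ge 1 x \<Longrightarrow> ord_ge 1 (x * y)"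
  using ord_ge_mult[OF _ ord_ge_0] by fastforce

lemma ord_ge_power: "ord_ge k x \<Longrightarrow> ord_ge (n * k) (x ^ n)"
  by (induction n) (auto simp: ord_ge_0 dest: ord_ge_mult)

lemma ord_ge_add: "ord_ge k x \<Longrightarrow> ord_ge k y \<Longrightarrow> ord_ge k (x + y)"
  by (simp add: ord_ge_def coef_add mps_add_def)

lemma ord_ge_sconst_mult: "ord_ge k x \<Longrightarrow> ord_ge k (sconst r * x)"
  by (simp add: ord_ge_def coef_sconst_mult mps_smult_def)

lemma ord_ge_X: "ord_ge 1 (series_of (X i))"
  by (auto simp: ord_ge_def X_def mdeg_def)

section \<open>Substitution into a power series in four variables\<close>

type_synonym index4 = "nat \<times> nat \<times> nat \<times> nat"

definition uncurry4 :: "(nat \<Rightarrow> nat \<Rightarrow> nat \<Rightarrow> nat \<Rightarrow> 'a) \<Rightarrow> index4 \<Rightarrow> 'a" where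
  "uncurry4 F q = (case q of (i, j, k, l) \<Rightarrow> F i j k l)"

definition index_deg :: "index4 \<Rightarrow> nat" where
  "index_deg q = (case q of (i, j, k, l) \<Rightarrow> i + j + k + l)"

definition index_box :: "nat \<Rightarrow> index4 set" where
  "index_box N = {..N} \<times> {..N} \<times> {..N} \<times> {..N}"

definition index_deg_le :: "nat \<Rightarrow> index4 set" where
  "index_deg_le N = {q. index_deg q \<le> N}"

lemma index_deg_le_subset_box: "index_deg_le N \<subseteq> index_box N"
  by (auto simp: index_deg_le_def index_box_def index_deg_def)

lemma finite_index_deg_le: "finite (index_deg_le N)"
  by (rule finite_subset[OF index_deg_le_subset_box]) (simp add: index_box_def)

definition shift1 :: "(nat \<Rightarrow> nat \<Rightarrow> nat \<Rightarrow> nat \<Rightarrow> real) \<Rightarrow> nat \<Rightarrow> nat \<Rightarrow> nat \<Rightarrow> nat \<Rightarrow> real" where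
  "shift1 H = (\<lambda>i j k l. if i = 0 then 0 else H (i - 1) j k l)"

definition shift2 :: "(nat \<Rightarrow> nat \<Rightarrow> nat \<Rightarrow> nat \<Rightarrow> real) \<Rightarrow> nat \<Rightarrow> nat \<Rightarrow> nat \<Rightarrow> nat \<Rightarrow> real" where
  "shift2 H = (\<lambda>i j k l. if j = 0 then 0 else H i (j - 1) k l)"

definition suc1 :: "index4 \<Rightarrow> index4" where
  "suc1 q = (case q of (i, j, k, l) \<Rightarrow> (Suc i, j, k, l))"

definition suc2 :: "index4 \<Rightarrow> index4" where
  "suc2 q = (case q of (i, j, k, l) \<Rightarrow> (i, Suc j, k, l))"

lemma subst4_add:
  "subst4 (\<lambda>i j k l. F i j k l + G i j k l) p1 p2 p3 p4 = mps_add (subst4 F p1 p2 p3 p4) (subst4 G p1 p2 p3 p4)"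
  by (simp add: subst4_def mps_add_def sum.distrib distrib_right fun_eq_iff)

lemma subst4_smult:
  "subst4 (\<lambda>i j k l. r * F i j k l) p1 p2 p3 p4 = mps_smult r (subst4 F p1 p2 p3 p4)"
  by (simp add: subst4_def mps_smult_def sum_distrib_left mult.assoc fun_eq_iff)

text \<open>The truncation of \<open>subst4\<close> at total exponent \<open>mdeg m\<close> is harmless exactly when the
  substituted series have no constant term.\<close>

locale subst4_positive_order =
  fixes p1 p2 p3 p4 :: mps
  assumes ord_p1: "ord_ge 1 (series_of p1)" and ord_p2: "ord_ge 1 (series_of p2)"
    and ord_p3: "ord_ge 1 (series_of p3)" and ord_p4: "ord_ge 1 (series_of p4)"
begin

definition index_mono :: "index4 \<Rightarrow> series" where
  "index_mono q = (case q of (i, j, k, l) \<Rightarrow>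
     (series_of p1 ^ i * series_of p2 ^ j) * (series_of p3 ^ k * series_of p4 ^ l))"

definition subst_term :: "(nat \<Rightarrow> nat \<Rightarrow> nat \<Rightarrow> nat \<Rightarrow> real) \<Rightarrow> mono \<Rightarrow> index4 \<Rightarrow> real" where
  "subst_term F m q = uncurry4 F q * coef (index_mono q) m"

lemma ord_ge_index_mono: "ord_ge (index_deg q) (index_mono q)"
proof -
  obtain i j k l where q: "q = (i, j, k, l)" by (cases q)
  have "ord_ge (i * 1 + j * 1 + (k * 1 + l * 1)) (index_mono q)"
    unfolding q index_mono_def prod.case
    by (intro ord_ge_mult ord_ge_power ord_p1 ord_p2 ord_p3 ord_p4)
  then show ?thesis by (simp add: q index_deg_def add.assoc)
qed

lemma subst_term_eq_0: "q \<notin> index_deg_le (mdeg m) \<Longrightarrow> subst_term F m q = 0"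
  using ord_ge_index_mono[of q] by (simp add: subst_term_def index_deg_le_def ord_ge_def)

lemma subst4_eq_sum:
  assumes "finite S" and "\<And>q. q \<in> index_deg_le (mdeg m) \<Longrightarrow> q \<notin> S \<Longrightarrow> uncurry4 F q = 0"
  shows "subst4 F p1 p2 p3 p4 m = (\<Sum>q\<in>S. subst_term F m q)"
proof -
  let ?T = "index_deg_le (mdeg m)"
  have mono: "mps_mult (mps_mult (mps_pow p1 i) (mps_pow p2 j)) (mps_mult (mps_pow p3 k) (mps_pow p4 l))
        = coef (index_mono (i, j, k, l))" for i j k l
    by (simp add: index_mono_def times_series_def series_of_pow[symmetric])
  have "subst4 F p1 p2 p3 p4 m = (\<Sum>q\<in>index_box (mdeg m). subst_term F m q)"
    by (simp add: subst4_def mono subst_term_def uncurry4_def index_box_def sum.cartesian_product)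
      (intro sum.cong refl, auto split: prod.splits)
  also have "\<dots> = (\<Sum>q\<in>?T. subst_term F m q)"
    by (rule sum.mono_neutral_right[OF _ index_deg_le_subset_box])
      (auto simp: index_box_def subst_term_eq_0)
  also have "\<dots> = (\<Sum>q\<in>?T \<union> S. subst_term F m q)"
    by (rule sum.mono_neutral_left) (auto simp: assms(1) finite_index_deg_le subst_term_eq_0)
  also have "\<dots> = (\<Sum>q\<in>S. subst_term F m q)"
    by (rule sum.mono_neutral_right) (auto simp: assms finite_index_deg_le subst_term_def)
  finally show ?thesis .
qed

text \<open>The degree hypothesis on \<open>\<sigma>\<close> makes the truncated index ranges of both sides correspond.\<close>

lemma subst4_shift:
  fixes \<sigma> :: "index4 \<Rightarrow> index4" and y :: series
  assumes mono_\<sigma>: "\<And>q. index_mono (\<sigma> q) = y * index_mono q"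
    and inj: "inj \<sigma>"
    and deg_\<sigma>: "\<And>q. index_deg (\<sigma> q) = Suc (index_deg q)"
    and G_\<sigma>: "\<And>q. uncurry4 G (\<sigma> q) = uncurry4 H q"
    and G_0: "\<And>q. q \<notin> range \<sigma> \<Longrightarrow> uncurry4 G q = 0"
  shows "series_of (subst4 G p1 p2 p3 p4) = y * series_of (subst4 H p1 p2 p3 p4)"
proof (rule coef_inject[THEN iffD1], rule ext)
  fix m
  let ?T = "index_deg_le (mdeg m)"
  have "coef (y * series_of (subst4 H p1 p2 p3 p4)) m
      = (\<Sum>p\<in>submonos m. \<Sum>q\<in>?T. coef y p * subst_term H (m - p) q)"
  proof (unfold coef_mult series_of_inverse', rule sum.cong[OF refl])
    fix p assume "p \<in> submonos m"
    then have "index_deg_le (mdeg (m - p)) \<subseteq> ?T"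
      using mdeg_submonos by (fastforce simp: index_deg_le_def)
    then show "coef y p * subst4 H p1 p2 p3 p4 (m - p)
        = (\<Sum>q\<in>?T. coef y p * subst_term H (m - p) q)"
      by (subst subst4_eq_sum[OF finite_index_deg_le]) (auto simp: sum_distrib_left)
  qed
  also have "\<dots> = (\<Sum>q\<in>?T. subst_term G m (\<sigma> q))"
    by (subst sum.swap) (simp add: subst_term_def G_\<sigma> mono_\<sigma> coef_mult sum_distrib_left mult_ac)
  also have "\<dots> = (\<Sum>q\<in>\<sigma> ` ?T. subst_term G m q)"
    by (simp add: sum.reindex inj_on_subset[OF inj])
  also have "\<dots> = subst4 G p1 p2 p3 p4 m"
  proof (rule subst4_eq_sum[symmetric])
    show "finite (\<sigma> ` ?T)" by (simp add: finite_index_deg_le)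
    fix q assume q: "q \<in> ?T" "q \<notin> \<sigma> ` ?T"
    have "q \<notin> range \<sigma>"
    proof
      assume "q \<in> range \<sigma>"
      then obtain q' where "q = \<sigma> q'" by auto
      with q deg_\<sigma>[of q'] show False by (auto simp: index_deg_le_def)
    qed
    then show "uncurry4 G q = 0" by (rule G_0)
  qed
  finally show "coef (series_of (subst4 G p1 p2 p3 p4)) m = coef (y * series_of (subst4 H p1 p2 p3 p4)) m"
    by simp
qed

lemma subst4_shift1: "series_of (subst4 (shift1 H) p1 p2 p3 p4) = series_of p1 * series_of (subst4 H p1 p2 p3 p4)"
proof (rule subst4_shift[where \<sigma>=suc1])
  fix q :: index4
  obtain i j k l where q: "q = (i, j, k, l)" by (cases q)
  show "index_mono (suc1 q) = series_of p1 * index_mono q"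
    by (simp add: q index_mono_def suc1_def mult_ac)
  show "index_deg (suc1 q) = Suc (index_deg q)"
    by (simp add: q index_deg_def suc1_def)
  show "uncurry4 (shift1 H) (suc1 q) = uncurry4 H q"
    by (simp add: q uncurry4_def shift1_def suc1_def)
  show "q \<notin> range suc1 \<Longrightarrow> uncurry4 (shift1 H) q = 0"
    by (cases i) (auto simp: q uncurry4_def shift1_def suc1_def image_iff)
qed (auto simp: inj_def suc1_def split: prod.splits)

lemma subst4_shift2: "series_of (subst4 (shift2 H) p1 p2 p3 p4) = series_of p2 * series_of (subst4 H p1 p2 p3 p4)"
proof (rule subst4_shift[where \<sigma>=suc2])
  fix q :: index4
  obtain i j k l where q: "q = (i, j, k, l)" by (cases q)
  show "index_mono (suc2 q) = series_of p2 * index_mono q"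
    by (simp add: q index_mono_def suc2_def mult_ac)
  show "index_deg (suc2 q) = Suc (index_deg q)"
    by (simp add: q index_deg_def suc2_def)
  show "uncurry4 (shift2 H) (suc2 q) = uncurry4 H q"
    by (simp add: q uncurry4_def shift2_def suc2_def)
  show "q \<notin> range suc2 \<Longrightarrow> uncurry4 (shift2 H) q = 0"
    by (cases j) (auto simp: q uncurry4_def shift2_def suc2_def image_iff)
qed (auto simp: inj_def suc2_def split: prod.splits)

end

section \<open>The coefficient ring \<open>R[[a,b]]\<close>\<close>

abbreviation ser_a :: series where "ser_a \<equiv> series_of inv_a"
abbreviation ser_b :: series where "ser_b \<equiv> series_of inv_b"

interpretation invariants: subst4_positive_order inv_a inv_b inv_c inv_e
proof
  show "ord_ge 1 ser_a" "ord_ge 1 ser_b"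
    unfolding inv_a_def inv_b_def by (rule ord_ge_X)+
  show "ord_ge 1 (series_of inv_c)" "ord_ge 1 (series_of inv_e)"
    unfolding inv_c_def inv_e_def series_of_add series_of_mult series_of_smult
    by (intro ord_ge_add ord_ge_sconst_mult ord_ge_1_mult ord_ge_X)+
qed

definition in_Rab :: "series \<Rightarrow> bool" where
  "in_Rab x \<longleftrightarrow> coef x \<in> Rab"

lemma in_Rab_iff: "in_Rab x \<longleftrightarrow> (\<exists>F. x = series_of (subst4 F inv_a inv_b inv_c inv_e))"
  unfolding in_Rab_def Rab_def by (auto simp: coef_inverse) (metis coef_inverse)

lemma in_Rab_series_of: "in_Rab (series_of f) \<longleftrightarrow> f \<in> Rab"
  by (simp add: in_Rab_def)

lemma in_Rab_add: "in_Rab x \<Longrightarrow> in_Rab y \<Longrightarrow> in_Rab (x + y)"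
  unfolding in_Rab_iff by (auto simp flip: series_of_add subst4_add)

lemma in_Rab_sconst_mult: "in_Rab x \<Longrightarrow> in_Rab (sconst r * x)"
  unfolding in_Rab_iff by (auto simp flip: series_of_smult subst4_smult)

lemma in_Rab_diff: "in_Rab x \<Longrightarrow> in_Rab y \<Longrightarrow> in_Rab (x - y)"
  using in_Rab_add[OF _ in_Rab_sconst_mult[of y "-1"]] by (simp add: sconst_uminus sconst_one)

lemma in_Rab_a_mult: "in_Rab x \<Longrightarrow> in_Rab (ser_a * x)"
  unfolding in_Rab_iff by (auto simp flip: invariants.subst4_shift1)

lemma in_Rab_b_mult: "in_Rab x \<Longrightarrow> in_Rab (ser_b * x)"
  unfolding in_Rab_iff by (auto simp flip: invariants.subst4_shift2)

lemma in_Rab_of_Ra: "g \<in> Ra \<Longrightarrow> in_Rab (series_of g)"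
  unfolding in_Rab_def Ra_def Rab_def by auto

lemma in_Rab_split_b:
  assumes "in_Rab x"
  obtains g h where "g \<in> Ra" and "in_Rab h" and "x = series_of g + ser_b * h"
proof -
  obtain F where x: "x = series_of (subst4 F inv_a inv_b inv_c inv_e)"
    using assms by (auto simp: in_Rab_iff)
  define F0 where "F0 = (\<lambda>i j k l. if j = 0 then F i j k l else 0)"
  define H where "H = (\<lambda>i j k l. F i (Suc j) k l)"
  have "F = (\<lambda>i j k l. F0 i j k l + shift2 H i j k l)"
    by (auto simp: fun_eq_iff F0_def H_def shift2_def)
  then have "x = series_of (subst4 F0 inv_a inv_b inv_c inv_e) + ser_b * series_of (subst4 H inv_a inv_b inv_c inv_e)"
    using x subst4_add[of F0 "shift2 H"] by (simp add: series_of_add invariants.subst4_shift2)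
  moreover have "subst4 F0 inv_a inv_b inv_c inv_e \<in> Ra"
    unfolding Ra_def F0_def by auto
  moreover have "in_Rab (series_of (subst4 H inv_a inv_b inv_c inv_e))"
    by (auto simp: in_Rab_iff)
  ultimately show ?thesis
    using that by blast
qed

lemma add_single_eq_single_iff:
  "m + Poly_Mapping.single i 1 = Poly_Mapping.single j (1::nat) \<longleftrightarrow> m = 0 \<and> i = j"
proof
  assume h: "m + Poly_Mapping.single i 1 = Poly_Mapping.single j 1"
  have lookup_eq: "Poly_Mapping.lookup m k + (1 when i = k) = (1 when j = k)" for k
    using arg_cong[OF h, of "\<lambda>p. Poly_Mapping.lookup p k"] by (simp add: lookup_add lookup_single)
  have "i = j"
    using lookup_eq[of i] by (simp add: when_def split: if_splits)
  moreover have "m = 0"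
    by (rule poly_mapping_eqI) (use lookup_eq \<open>i = j\<close> in \<open>simp add: when_def split: if_splits\<close>)
  ultimately show "m = 0 \<and> i = j" by simp
qed auto

lemma pd_X: "pd i (X j) = (if i = j then mps_one else (\<lambda>_. 0))"
proof
  fix m
  show "pd i (X j) m = (if i = j then mps_one else (\<lambda>_. 0)) m"
    using add_single_eq_single_iff[of m i j] by (auto simp: pd_def X_def mps_one_def)
qed

lemma series_of_opY:
  "series_of (opY f) = series_of (X 2) * series_of (pd 1 f)
     + sconst 2 * (series_of (X 4) * series_of (pd 3 f)) + sconst 2 * (series_of (X 5) * series_of (pd 4 f))"
  by (simp add: opY_def series_of_add series_of_mult series_of_smult add.assoc)

lemma opY_a: "series_of (opY inv_a) = series_of (X 2)"
  by (simp add: series_of_opY inv_a_def pd_X series_of_one series_of_zero)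

lemma opY_b: "series_of (opY inv_b) = sconst 2 * series_of (X 4)"
  by (simp add: series_of_opY inv_b_def pd_X series_of_one series_of_zero)

lemma series_of_trans1:
  "series_of (trans1 f fw w ww i) = sconst (- fw * Mstar_app w i) * series_of f + sconst (- ww * w i) * series_of (opY f)"
  by (simp add: trans1_def series_of_add series_of_smult)

lemma Mstar_app_evec: "Mstar_app (evec k) i = (if k \<in> {1..5} then Mstar i k else 0)"
proof -
  have "Mstar_app (evec k) i = (\<Sum>j\<in>{1..5}. if k = j then Mstar i k else 0)"
    unfolding Mstar_app_def evec_def by (rule sum.cong) auto
  then show ?thesis by simp
qed

lemma series_of_d:
  "series_of inv_d = 2 * (series_of (X 1) * series_of (X 4)) - 2 * (series_of (X 2) * series_of (X 3))"
  by (simp add: inv_d_def series_of_add series_of_mult series_of_smult sconst_uminus sconst_numeral)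

lemma d_relation_u:
  "sconst 1 * (series_of inv_d * sconst (evec 2 i)) =
     sconst 2 * ser_b * series_of (trans1 inv_a 1 (evec 2) 1 i)
     + sconst (-1) * ser_a * series_of (trans1 inv_b 2 (evec 2) 1 i)"
  unfolding series_of_trans1 opY_a opY_b Mstar_app_evec
  by (cases "i = 1"; cases "i = 2"; cases "i = 4"; cases "i = 5";
      simp add: series_of_d inv_a_def inv_b_def Mstar_def evec_def sconst_uminus sconst_numeral
        sconst_one sconst_zero algebra_simps)

lemma d_relation_v:
  "sconst 2 * (series_of inv_d * sconst (evec 5 i)) =
     sconst 2 * ser_b * series_of (trans1 inv_a 1 (evec 5) 2 i)
     + sconst (-1) * ser_a * series_of (trans1 inv_b 2 (evec 5) 2 i)"
  unfolding series_of_trans1 opY_a opY_b Mstar_app_evec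
  by (cases "i = 1"; cases "i = 2"; cases "i = 4"; cases "i = 5";
      simp add: series_of_d inv_a_def inv_b_def Mstar_def evec_def sconst_uminus sconst_numeral
        sconst_one sconst_zero algebra_simps)

section \<open>Absorbing the \<open>d w\<close> term\<close>

context
  fixes w :: "nat \<Rightarrow> real" and ww \<gamma> \<alpha> \<beta> :: real
  assumes \<gamma>: "\<gamma> \<noteq> 0" and \<alpha>: "\<alpha> \<noteq> 0"
    and d_relation: "\<And>i. sconst \<gamma> * (series_of inv_d * sconst (w i)) =
       sconst \<alpha> * ser_b * series_of (trans1 inv_a 1 w ww i) + sconst \<beta> * ser_a * series_of (trans1 inv_b 2 w ww i)"
begin

lemma span_with_d_subset:
  "{vadd (vscale F1 (vscale inv_d (vconst w)))
       (vadd (vscale F2 (trans1 inv_b 2 w ww)) (vscale F3 (trans1 inv_a 1 w ww)))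
     | F1 F2 F3. F1 \<in> Rab \<and> F2 \<in> Rab \<and> F3 \<in> Ra}
   \<subseteq> {vadd (vscale G1 (trans1 inv_b 2 w ww)) (vscale G2 (trans1 inv_a 1 w ww))
     | G1 G2. G1 \<in> Rab \<and> G2 \<in> Rab}"
proof clarify
  fix F1 F2 F3 assume F: "F1 \<in> Rab" "F2 \<in> Rab" "F3 \<in> Ra"
  define G1 where "G1 = coef (series_of F2 + sconst (1 / \<gamma>) * sconst \<beta> * (ser_a * series_of F1))"
  define G2 where "G2 = coef (series_of F3 + sconst (1 / \<gamma>) * sconst \<alpha> * (ser_b * series_of F1))"
  have F_Rab: "in_Rab (series_of F1)" "in_Rab (series_of F2)" "in_Rab (series_of F3)"
    using F in_Rab_of_Ra by (auto simp: in_Rab_series_of)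
  have "G1 \<in> Rab" "G2 \<in> Rab"
    unfolding G1_def G2_def in_Rab_def[symmetric] mult.assoc
    by (intro in_Rab_add in_Rab_sconst_mult in_Rab_a_mult in_Rab_b_mult F_Rab)+
  moreover have "vadd (vscale F1 (vscale inv_d (vconst w)))
       (vadd (vscale F2 (trans1 inv_b 2 w ww)) (vscale F3 (trans1 inv_a 1 w ww)))
     = vadd (vscale G1 (trans1 inv_b 2 w ww)) (vscale G2 (trans1 inv_a 1 w ww))"
  proof
    fix i
    have d_w: "series_of inv_d * sconst (w i) = sconst (1 / \<gamma>) *
       (sconst \<alpha> * ser_b * series_of (trans1 inv_a 1 w ww i) + sconst \<beta> * ser_a * series_of (trans1 inv_b 2 w ww i))"
      using d_relation[of i] sconst_divide_cancel[OF \<gamma>] by (metis mult.assoc mult_1)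
    show "vadd (vscale F1 (vscale inv_d (vconst w)))
        (vadd (vscale F2 (trans1 inv_b 2 w ww)) (vscale F3 (trans1 inv_a 1 w ww))) i
      = vadd (vscale G1 (trans1 inv_b 2 w ww)) (vscale G2 (trans1 inv_a 1 w ww)) i"
      unfolding series_of_inject[symmetric, simplified]
      by (simp add: vadd_def vscale_def vconst_def series_of_add series_of_mult series_of_smult
          series_of_one G1_def G2_def coef_inverse d_w algebra_simps)
  qed
  ultimately show "\<exists>G1 G2. vadd (vscale F1 (vscale inv_d (vconst w)))
       (vadd (vscale F2 (trans1 inv_b 2 w ww)) (vscale F3 (trans1 inv_a 1 w ww)))
     = vadd (vscale G1 (trans1 inv_b 2 w ww)) (vscale G2 (trans1 inv_a 1 w ww)) \<and> G1 \<in> Rab \<and> G2 \<in> Rab"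
    by blast
qed

lemma span_with_d_supset:
  "{vadd (vscale G1 (trans1 inv_b 2 w ww)) (vscale G2 (trans1 inv_a 1 w ww))
     | G1 G2. G1 \<in> Rab \<and> G2 \<in> Rab}
   \<subseteq> {vadd (vscale F1 (vscale inv_d (vconst w)))
       (vadd (vscale F2 (trans1 inv_b 2 w ww)) (vscale F3 (trans1 inv_a 1 w ww)))
     | F1 F2 F3. F1 \<in> Rab \<and> F2 \<in> Rab \<and> F3 \<in> Ra}"
proof clarify
  fix G1 G2 assume G: "G1 \<in> Rab" "G2 \<in> Rab"
  then have G_Rab: "in_Rab (series_of G1)" "in_Rab (series_of G2)"
    by (simp_all add: in_Rab_series_of)
  obtain g h where g: "g \<in> Ra" and h: "in_Rab h" and G2: "series_of G2 = series_of g + ser_b * h"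
    using in_Rab_split_b[OF G_Rab(2)] .
  define F1 where "F1 = coef (sconst (1 / \<alpha>) * sconst \<gamma> * h)"
  define F2 where "F2 = coef (series_of G1 - sconst (1 / \<alpha>) * sconst \<beta> * (ser_a * h))"
  have "F1 \<in> Rab" "F2 \<in> Rab"
    unfolding F1_def F2_def in_Rab_def[symmetric] mult.assoc
    by (intro in_Rab_diff in_Rab_sconst_mult in_Rab_a_mult G_Rab h)+
  moreover have "vadd (vscale G1 (trans1 inv_b 2 w ww)) (vscale G2 (trans1 inv_a 1 w ww))
     = vadd (vscale F1 (vscale inv_d (vconst w)))
         (vadd (vscale F2 (trans1 inv_b 2 w ww)) (vscale g (trans1 inv_a 1 w ww)))"
  proof
    fix i
    have "sconst (1 / \<alpha>) * (sconst \<alpha> * ser_b * series_of (trans1 inv_a 1 w ww i))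
        = (sconst (1 / \<alpha>) * sconst \<alpha>) * (ser_b * series_of (trans1 inv_a 1 w ww i))"
      by (simp add: mult.assoc)
    then have b_trans_a: "ser_b * series_of (trans1 inv_a 1 w ww i) = sconst (1 / \<alpha>) *
       (sconst \<gamma> * (series_of inv_d * sconst (w i)) - sconst \<beta> * ser_a * series_of (trans1 inv_b 2 w ww i))"
      using d_relation[of i] sconst_divide_cancel[OF \<alpha>] by simp
    have G2_coef: "G2 = coef (series_of g + ser_b * h)"
      using arg_cong[OF G2, of coef] by simp
    show "vadd (vscale G1 (trans1 inv_b 2 w ww)) (vscale G2 (trans1 inv_a 1 w ww)) i
      = vadd (vscale F1 (vscale inv_d (vconst w)))
          (vadd (vscale F2 (trans1 inv_b 2 w ww)) (vscale g (trans1 inv_a 1 w ww))) i"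
      unfolding series_of_inject[symmetric, simplified]
      by (simp add: vadd_def vscale_def vconst_def series_of_add series_of_mult series_of_smult
          series_of_one F1_def F2_def G2_coef coef_inverse algebra_simps b_trans_a)
  qed
  ultimately show "\<exists>F1 F2 F3. vadd (vscale G1 (trans1 inv_b 2 w ww)) (vscale G2 (trans1 inv_a 1 w ww))
     = vadd (vscale F1 (vscale inv_d (vconst w)))
         (vadd (vscale F2 (trans1 inv_b 2 w ww)) (vscale F3 (trans1 inv_a 1 w ww)))
     \<and> F1 \<in> Rab \<and> F2 \<in> Rab \<and> F3 \<in> Ra"
    using g by blast
qed

end

theorem lemma17p12:
  assumes "(w, ww) \<in> {(evec 2, 1), (evec 5, 2)}"
  shows "{vadd (vscale F1 (vscale inv_d (vconst w)))
            (vadd (vscale F2 (trans1 inv_b 2 w ww)) (vscale F3 (trans1 inv_a 1 w ww)))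
          | F1 F2 F3. F1 \<in> Rab \<and> F2 \<in> Rab \<and> F3 \<in> Ra}
       = {vadd (vscale G1 (trans1 inv_b 2 w ww)) (vscale G2 (trans1 inv_a 1 w ww))
          | G1 G2. G1 \<in> Rab \<and> G2 \<in> Rab}"
proof -
  obtain \<gamma> :: real where "\<gamma> \<noteq> 0"
    and "\<And>i. sconst \<gamma> * (series_of inv_d * sconst (w i)) =
       sconst 2 * ser_b * series_of (trans1 inv_a 1 w ww i) + sconst (-1) * ser_a * series_of (trans1 inv_b 2 w ww i)"
  proof -
    from assms consider "w = evec 2" "ww = 1" | "w = evec 5" "ww = 2" by auto
    then show thesis
    proof cases
      case 1 then show thesis using that[of 1] d_relation_u by simp
    next
      case 2 then show thesis using that[of 2] d_relation_v by simp
    qed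
  qed
  then show ?thesis
    by (intro equalityI span_with_d_subset[where \<alpha>=2 and \<beta>="-1"]
        span_with_d_supset[where \<alpha>=2 and \<beta>="-1"]) simp_all
qed

end
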